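(* Fix $p\in(0,1)$ and put $q=1-p$. Let $T_n$ be the completion time of the one-set clumsy coupon collector on $n$ types started from the empty collection. Then $pq^nT_n\Rightarrow\mathrm{Exp}(1)$ as $n\to\infty$.
   Context: One-set clumsy coupon collector: the state is $X(t)=(X_1(t),\dots,X_n(t))\in\{0,1\}^n$ ($X_i(t)=1$ meaning type $i$ is present), with $X(0)=(0,\dots,0)$. At each step one type $i$ is chosen uniformly from $[n]$, independently of the past, and $X_i$ is set to $1$ with probability $q$ and to $0$ with probability $p$ (independently); other coordinates are unchanged. $T_n=\inf\{t\ge0:X(t)=(1,\dots,1)\}$. $\mathrm{Exp}(1)$ is the exponential law with mean 1. *)

theory Defs
  imports "HOL-Probability.Probability"
begin

text \<open>One step of the one-set clumsy coupon collector on n types (types 0..n-1):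
  a type i chosen uniformly from {..<n} and an independent coin b which is True
  (set X_i := 1) with probability q and False (set X_i := 0) with probability p = 1-q.\<close>
definition clumsy_step :: "nat \<Rightarrow> real \<Rightarrow> (nat \<times> bool) pmf" where
  "clumsy_step n q = pair_pmf (pmf_of_set {..<n}) (bernoulli_pmf q)"

definition clumsy_space :: "nat \<Rightarrow> real \<Rightarrow> (nat \<Rightarrow> nat \<times> bool) measure" where
  "clumsy_space n q = PiM UNIV (\<lambda>_::nat. measure_pmf (clumsy_step n q))"

text \<open>State X(t), represented as the set of present types {i. X_i(t) = 1}; X(0) is empty.\<close>
fun clumsy_state :: "(nat \<Rightarrow> nat \<times> bool) \<Rightarrow> nat \<Rightarrow> nat set" where
  "clumsy_state \<omega> 0 = {}"
| "clumsy_state \<omega> (Suc t) =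
     (if snd (\<omega> t) then insert (fst (\<omega> t)) (clumsy_state \<omega> t)
      else clumsy_state \<omega> t - {fst (\<omega> t)})"

definition clumsy_T :: "nat \<Rightarrow> (nat \<Rightarrow> nat \<times> bool) \<Rightarrow> enat" where
  "clumsy_T n \<omega> = (if \<exists>t. clumsy_state \<omega> t = {..<n}
                     then enat (LEAST t. clumsy_state \<omega> t = {..<n}) else \<infinity>)"

end

theory Submission
  imports Defs "HOL-Real_Asymp.Real_Asymp"
begin

(* The number of present types is a birth-death chain on {0..n} that moves up from k with
   probability q(n-k)/n and down with probability pk/n. Its expected time m(k) to reach n
   is harmonic: one step decreases E m(|X|) by exactly 1. Since m decreases in k,
   m(n-1) <= m(|X|) <= m(0) before completion, and induction on t squeezes P(T > t) between
   (1 - 1/m(n-1))^t m(k)/m(0) and (1 - 1/m(0))^t m(k)/m(n-1). Finally m(n-1) = (1-q^n)/(pq^n)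
   exactly, and m(0) - m(n-1) = o(1/(pq^n)), so both geometric rates give
   P(T_n > x/(pq^n)) --> exp(-x). *)

section \<open>Sample paths\<close>

definition clumsy_update :: "nat set \<Rightarrow> nat \<times> bool \<Rightarrow> nat set" where
  "clumsy_update A x = (if snd x then insert (fst x) A else A - {fst x})"

fun clumsy_run :: "nat set \<Rightarrow> (nat \<Rightarrow> nat \<times> bool) \<Rightarrow> nat \<Rightarrow> nat set" where
  "clumsy_run A \<omega> 0 = A"
| "clumsy_run A \<omega> (Suc t) = clumsy_update (clumsy_run A \<omega> t) (\<omega> t)"

definition clumsy_unfinished :: "nat \<Rightarrow> nat set \<Rightarrow> nat \<Rightarrow> (nat \<Rightarrow> nat \<times> bool) set" where
  "clumsy_unfinished n A t = {\<omega>. \<forall>s\<le>t. clumsy_run A \<omega> s \<noteq> {..<n}}"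

lemma clumsy_state_eq_run: "clumsy_state \<omega> t = clumsy_run {} \<omega> t"
  by (induction t) (auto simp: clumsy_update_def)

lemma clumsy_run_case_nat:
  "clumsy_run A (case_nat x \<omega>) (Suc t) = clumsy_run (clumsy_update A x) \<omega> t"
  by (induction t) auto

lemma clumsy_update_subset:
  "A \<subseteq> {..<n} \<Longrightarrow> x \<in> {..<n} \<times> UNIV \<Longrightarrow> clumsy_update A x \<subseteq> {..<n}"
  by (auto simp: clumsy_update_def)

lemma card_less_of_subset_lessThan: "A \<subseteq> {..<n} \<Longrightarrow> A \<noteq> {..<n} \<Longrightarrow> card A < n"
  by (metis psubset_card_mono finite_lessThan card_lessThan psubsetI)

lemma case_nat_in_clumsy_unfinished_Suc:
  "case_nat x \<omega> \<in> clumsy_unfinished n A (Suc t) \<longleftrightarrow>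
     A \<noteq> {..<n} \<and> \<omega> \<in> clumsy_unfinished n (clumsy_update A x) t"
proof -
  have "(\<forall>s\<le>Suc t. P s) \<longleftrightarrow> P 0 \<and> (\<forall>s\<le>t. P (Suc s))" for P :: "nat \<Rightarrow> bool"
    by (metis Suc_le_mono le0 not0_implies_Suc)
  then show ?thesis
    unfolding clumsy_unfinished_def by (simp add: clumsy_run_case_nat del: clumsy_run.simps(2))
qed

lemma space_clumsy_space: "space (clumsy_space n q) = UNIV"
  by (simp add: clumsy_space_def space_PiM PiE_UNIV_domain)

lemma prob_space_clumsy_space: "prob_space (clumsy_space n q)"
  unfolding clumsy_space_def by (intro prob_space_PiM prob_space_measure_pmf)

lemma clumsy_run_sets: "{\<omega>. clumsy_run A \<omega> s \<in> B} \<in> sets (clumsy_space n q)"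
proof (induction s arbitrary: B)
  case 0
  show ?case
    using sets.top[of "clumsy_space n q"] by (cases "A \<in> B") (auto simp: space_clumsy_space)
next
  case (Suc s)
  have coordinate: "{\<omega>. \<omega> s = x} \<in> sets (clumsy_space n q)" for x
  proof -
    have "(\<lambda>\<omega>. \<omega> s) \<in> measurable (clumsy_space n q) (measure_pmf (clumsy_step n q))"
      unfolding clumsy_space_def by (rule measurable_component_singleton) auto
    from measurable_sets[OF this, of "{x}"] show ?thesis
      by (simp add: space_clumsy_space vimage_def)
  qed
  have split: "{\<omega>. clumsy_run A \<omega> (Suc s) \<in> B} =
      (\<Union>x. {\<omega>. \<omega> s = x} \<inter> {\<omega>. clumsy_run A \<omega> s \<in> {C. clumsy_update C x \<in> B}})"
    by auto
  show ?case
    unfolding split by (rule sets.countable_UN''; (rule sets.Int[OF coordinate Suc])?; simp)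
qed

lemma clumsy_unfinished_sets: "clumsy_unfinished n A t \<in> sets (clumsy_space n q)"
proof -
  have "clumsy_unfinished n A t = (\<Inter>s\<in>{..t}. {\<omega>. clumsy_run A \<omega> s \<in> - {{..<n}}})"
    by (auto simp: clumsy_unfinished_def)
  moreover have "{\<omega>. clumsy_run A \<omega> s \<in> - {{..<n}}} \<in> sets (clumsy_space n q)" for s
    by (rule clumsy_run_sets)
  ultimately show ?thesis
    by (auto intro!: sets.finite_INT)
qed

lemma measure_clumsy_unfinished_0:
  "measure (clumsy_space n q) (clumsy_unfinished n A 0) = (if A = {..<n} then 0 else 1)"
proof -
  interpret prob_space "clumsy_space n q" by (rule prob_space_clumsy_space)
  have "clumsy_unfinished n A 0 = (if A = {..<n} then {} else space (clumsy_space n q))"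
    by (auto simp: clumsy_unfinished_def space_clumsy_space)
  then show ?thesis by (simp add: prob_space)
qed

lemma measure_clumsy_unfinished_Suc:
  assumes "1 \<le> n"
  shows "measure (clumsy_space n q) (clumsy_unfinished n A (Suc t)) =
    (if A = {..<n} then 0 else
      (\<Sum>x\<in>{..<n} \<times> UNIV. pmf (clumsy_step n q) x *
         measure (clumsy_space n q) (clumsy_unfinished n (clumsy_update A x) t)))"
proof -
  let ?M = "measure_pmf (clumsy_step n q)"
  let ?E = "clumsy_unfinished n A (Suc t)"
  interpret S: sequence_space ?M
    by (simp add: sequence_space_def product_prob_space_def product_sigma_finite_def
        prob_space_measure_pmf product_prob_space_axioms_def prob_space_imp_sigma_finite)
  interpret P: prob_space "clumsy_space n q" by (rule prob_space_clumsy_space)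
  have space_eq: "clumsy_space n q = S.S" by (simp add: clumsy_space_def)
  have [measurable]: "?E \<in> sets S.S"
    using clumsy_unfinished_sets by (simp flip: space_eq)
  have support: "set_pmf (clumsy_step n q) \<subseteq> {..<n} \<times> UNIV"
    using assms by (auto simp: clumsy_step_def lessThan_empty_iff)
  have "emeasure (clumsy_space n q) ?E =
      (\<integral>\<^sup>+\<omega>. indicator ?E \<omega> \<partial>(distr (?M \<Otimes>\<^sub>M S.S) S.S (\<lambda>(s, \<omega>). case_nat s \<omega>)))"
    by (simp add: space_eq S.PiM_iter)
  also have "\<dots> = (\<integral>\<^sup>+z. indicator ?E ((\<lambda>(s, \<omega>). case_nat s \<omega>) z) \<partial>(?M \<Otimes>\<^sub>M S.S))"
    by (rule nn_integral_distr) simp_all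
  also have "\<dots> = (\<integral>\<^sup>+x. \<integral>\<^sup>+\<omega>. indicator ?E (case_nat x \<omega>) \<partial>S.S \<partial>?M)"
  proof -
    have m: "(\<lambda>z. indicator ?E ((\<lambda>(s, \<omega>). case_nat s \<omega>) z) :: ennreal) \<in> borel_measurable (?M \<Otimes>\<^sub>M S.S)"
      by measurable
    show ?thesis using S.nn_integral_fst[OF m] by simp
  qed
  also have "\<dots> = (\<integral>\<^sup>+x. (if A = {..<n} then 0
                   else emeasure (clumsy_space n q) (clumsy_unfinished n (clumsy_update A x) t)) \<partial>?M)"
  proof (rule nn_integral_cong)
    fix x
    have "(\<integral>\<^sup>+\<omega>. indicator ?E (case_nat x \<omega>) \<partial>S.S) =
          (\<integral>\<^sup>+\<omega>. (if A = {..<n} then 0 else indicator (clumsy_unfinished n (clumsy_update A x) t) \<omega>) \<partial>S.S)"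
      by (intro nn_integral_cong) (auto simp: indicator_def case_nat_in_clumsy_unfinished_Suc)
    then show "(\<integral>\<^sup>+\<omega>. indicator ?E (case_nat x \<omega>) \<partial>S.S) =
        (if A = {..<n} then 0 else emeasure (clumsy_space n q) (clumsy_unfinished n (clumsy_update A x) t))"
      using clumsy_unfinished_sets[of n "clumsy_update A x" t q] by (simp add: space_eq)
  qed
  also have "\<dots> = (\<Sum>x\<in>{..<n} \<times> UNIV. (if A = {..<n} then 0
      else emeasure (clumsy_space n q) (clumsy_unfinished n (clumsy_update A x) t)) * pmf (clumsy_step n q) x)"
    using support by (subst nn_integral_measure_pmf_support) auto
  also have "\<dots> = ennreal (if A = {..<n} then 0 else
      (\<Sum>x\<in>{..<n} \<times> UNIV. pmf (clumsy_step n q) x *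
         measure (clumsy_space n q) (clumsy_unfinished n (clumsy_update A x) t)))"
    by (auto simp: P.emeasure_eq_measure sum_ennreal[symmetric] ennreal_mult'' mult.commute
        intro!: sum.cong)
  finally show ?thesis
    by (simp add: P.emeasure_eq_measure sum_nonneg)
qed

lemma pmf_clumsy_step:
  assumes "1 \<le> n" "0 \<le> q" "q \<le> 1"
  shows "pmf (clumsy_step n q) (i, b) = indicator {..<n} i / n * (if b then q else 1 - q)"
proof -
  have "{..<n} \<noteq> ({}::nat set)"
    using assms by (auto simp: lessThan_empty_iff)
  then show ?thesis
    using assms by (auto simp: clumsy_step_def pmf_pair)
qed

lemma sum_clumsy_step_card_update:
  assumes "1 \<le> n" "0 \<le> q" "q \<le> 1" "A \<subseteq> {..<n}"
  shows "(\<Sum>x\<in>{..<n} \<times> UNIV. pmf (clumsy_step n q) x * h (card (clumsy_update A x))) =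
     real (card A) / n * (q * h (card A) + (1 - q) * h (card A - 1)) +
     (real n - real (card A)) / n * (q * h (card A + 1) + (1 - q) * h (card A))"
proof -
  have fin: "finite A" using assms(4) finite_subset by blast
  let ?g = "\<lambda>i. (q * h (card (insert i A)) + (1 - q) * h (card (A - {i}))) / n"
  have "(\<Sum>x\<in>{..<n} \<times> UNIV. pmf (clumsy_step n q) x * h (card (clumsy_update A x))) =
        (\<Sum>i\<in>{..<n}. \<Sum>b\<in>UNIV. pmf (clumsy_step n q) (i, b) * h (card (clumsy_update A (i, b))))"
    by (simp add: sum.cartesian_product)
  also have "\<dots> = (\<Sum>i\<in>{..<n}. ?g i)"
    using assms by (intro sum.cong) (auto simp: UNIV_bool pmf_clumsy_step clumsy_update_def field_simps)
  also have "\<dots> = (\<Sum>i\<in>A. ?g i) + (\<Sum>i\<in>{..<n} - A. ?g i)"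
    using assms(4) by (metis (no_types, lifting) add.commute finite_lessThan sum.subset_diff)
  also have "(\<Sum>i\<in>A. ?g i) = (\<Sum>i\<in>A. (q * h (card A) + (1 - q) * h (card A - 1)) / n)"
    using fin by (intro sum.cong) (auto simp: insert_absorb card_Diff_singleton)
  also have "(\<Sum>i\<in>{..<n} - A. ?g i) = (\<Sum>i\<in>{..<n} - A. (q * h (card A + 1) + (1 - q) * h (card A)) / n)"
    using fin by (intro sum.cong) (auto simp: card_insert_if)
  also have "card ({..<n} - A) = n - card A"
    using assms(4) fin by (simp add: card_Diff_subset)
  moreover have "card A \<le> n"
    using assms(4) by (metis card_lessThan card_mono finite_lessThan)
  ultimately show ?thesis by (simp add: of_nat_diff)
qed

section \<open>Expected hitting times of the cardinality chain\<close>

lemma choose_le_choose_mult_choose: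
  assumes "l \<le> n - r" "r \<le> n"
  shows "n choose l \<le> (n choose r) * ((n - r) choose l)"
proof -
  have "(n choose (n - l)) * ((n - l) choose r) = (n choose r) * ((n - r) choose (n - l - r))"
    using assms by (intro choose_mult) auto
  moreover have "n choose (n - l) = n choose l"
    using assms by (metis binomial_symmetric diff_le_self le_trans)
  moreover have "(n - r) choose (n - l - r) = (n - r) choose l"
  proof -
    have "n - l - r = (n - r) - l" by simp
    then show ?thesis using assms binomial_symmetric[of l "n - r"] by simp
  qed
  moreover have "1 \<le> (n - l) choose r"
    using assms by (simp add: Suc_leI)
  ultimately show ?thesis
    by (metis mult.right_neutral mult_le_mono2)
qed

locale clumsy_collector =
  fixes p q :: real
  assumes p_pos: "0 < p" and q_pos: "0 < q" and p_plus_q: "p + q = 1"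
begin

lemma q_lt_1: "q < 1" and one_minus_q: "1 - q = p"
  using p_pos q_pos p_plus_q by auto

definition bin_weight :: "nat \<Rightarrow> nat \<Rightarrow> real" where
  "bin_weight n j = real (n choose j) * q ^ j * p ^ (n - j)"

definition bin_cdf :: "nat \<Rightarrow> nat \<Rightarrow> real" where
  "bin_cdf n j = (\<Sum>l\<le>j. bin_weight n l)"

text \<open>bin_weight n is the stationary law Bin(n, q) of the number of present types. Balancing the
  stationary flow across the edge between j and j + 1, whose up-probability is q(n - j)/n, gives
  the expected time hit_step n j to climb from j to j + 1, so hit_time n k is the expected
  completion time from k present types. Only the harmonic identity hit_time_harmonic, not this
  interpretation, enters the proofs.\<close>

definition hit_step :: "nat \<Rightarrow> nat \<Rightarrow> real" where
  "hit_step n j = bin_cdf n j / (bin_weight n j * (q * (real n - real j) / real n))"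

definition hit_time :: "nat \<Rightarrow> nat \<Rightarrow> real" where
  "hit_time n k = (\<Sum>j\<in>{k..<n}. hit_step n j)"

lemma bin_weight_pos: "j \<le> n \<Longrightarrow> 0 < bin_weight n j"
  using p_pos q_pos by (simp add: bin_weight_def)

lemma bin_weight_nonneg: "0 \<le> bin_weight n j"
  using p_pos q_pos by (simp add: bin_weight_def)

lemma bin_weight_le_bin_cdf: "bin_weight n j \<le> bin_cdf n j"
  unfolding bin_cdf_def by (rule member_le_sum) (auto intro: bin_weight_nonneg)

lemma bin_cdf_total: "bin_cdf n n = 1"
  using binomial_ring[of q p n] p_plus_q by (simp add: bin_cdf_def bin_weight_def add.commute)

lemma bin_cdf_le_1: "j \<le> n \<Longrightarrow> bin_cdf n j \<le> 1"
  unfolding bin_cdf_total[of n, symmetric] bin_cdf_def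
  by (rule sum_mono2) (auto intro: bin_weight_nonneg)

lemma bin_cdf_tail_le:
  assumes "r \<le> n"
  shows "bin_cdf n (n - r) \<le> real (n choose r) * p ^ r"
proof -
  have "bin_cdf n (n - r) = (\<Sum>l\<le>n - r. real (n choose l) * q ^ l * p ^ (n - l))"
    by (simp add: bin_cdf_def bin_weight_def)
  also have "\<dots> \<le> (\<Sum>l\<le>n - r. real (n choose r) * p ^ r * (real ((n - r) choose l) * q ^ l * p ^ (n - r - l)))"
  proof (rule sum_mono)
    fix l assume l: "l \<in> {..n - r}"
    have "p ^ (n - l) = p ^ r * p ^ (n - r - l)"
      using l assms by (simp flip: power_add)
    moreover have "real (n choose l) \<le> real (n choose r) * real ((n - r) choose l)"
      using choose_le_choose_mult_choose[of l n r] l assms by (simp flip: of_nat_mult)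
    ultimately show "real (n choose l) * q ^ l * p ^ (n - l) \<le>
        real (n choose r) * p ^ r * (real ((n - r) choose l) * q ^ l * p ^ (n - r - l))"
      using p_pos q_pos by (simp add: mult_ac mult_right_mono)
  qed
  also have "\<dots> = real (n choose r) * p ^ r * (\<Sum>l\<le>n - r. real ((n - r) choose l) * q ^ l * p ^ (n - r - l))"
    by (simp only: sum_distrib_left)
  also have "(\<Sum>l\<le>n - r. real ((n - r) choose l) * q ^ l * p ^ (n - r - l)) = (q + p) ^ (n - r)"
    by (rule binomial_ring[symmetric])
  finally show ?thesis
    using p_plus_q by (simp add: add.commute)
qed

lemma hit_time_self [simp]: "hit_time n n = 0"
  by (simp add: hit_time_def)

lemma hit_time_Suc: "k < n \<Longrightarrow> hit_time n k = hit_step n k + hit_time n (Suc k)"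
  unfolding hit_time_def by (simp add: sum.atLeast_Suc_lessThan)

lemma hit_step_pos: "j < n \<Longrightarrow> 0 < hit_step n j"
  unfolding hit_step_def using bin_weight_le_bin_cdf[of n j] bin_weight_pos[of j n] q_pos
  by (intro divide_pos_pos mult_pos_pos) auto

lemma hit_time_antimono: "k \<le> k' \<Longrightarrow> hit_time n k' \<le> hit_time n k"
  unfolding hit_time_def by (rule sum_mono2) (auto intro: less_imp_le hit_step_pos)

lemma hit_time_pos: "k < n \<Longrightarrow> 0 < hit_time n k"
  using hit_time_Suc[of k n] hit_step_pos[of k n] hit_time_antimono[of "Suc k" n n] by simp

lemma hit_time_nonneg: "0 \<le> hit_time n k"
  using hit_time_pos[of k n] by (cases "k < n") (auto simp: hit_time_def)

lemma hit_step_balance: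
  assumes "0 < k" "k < n"
  shows "q * (real n - real k) / n * hit_step n k - p * k / n * hit_step n (k - 1) = 1"
proof -
  obtain j where k: "k = Suc j" using assms by (cases k) auto
  have flow: "bin_weight n j * (q * (real n - real j) / n) = bin_weight n k * (p * k / n)"
  proof -
    have absorb: "real (n - j) * real (n choose j) = real (Suc j) * real (n choose Suc j)"
      using binomial_absorb_comp[of n j] binomial_absorption[of j n] by (metis of_nat_mult)
    have nj: "n - j = Suc (n - k)" "real n - real j = real (n - j)"
      using assms k by (auto simp: of_nat_diff)
    have "bin_weight n j * (q * (real n - real j) / n) =
          (real (n - j) * real (n choose j)) * (q ^ Suc j * p ^ Suc (n - k) / n)"
      unfolding bin_weight_def nj by (simp add: field_simps)
    also have "\<dots> = bin_weight n k * (p * k / n)"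
      unfolding absorb bin_weight_def k by (simp add: field_simps)
    finally show ?thesis .
  qed
  have pos: "0 < bin_weight n k" "0 < q * (real n - real k) / n"
    using bin_weight_pos assms q_pos by auto
  have cancel: "a \<noteq> 0 \<Longrightarrow> a * (F / (P * a)) = F / P" for a F P :: real
    by simp
  have "q * (real n - real k) / n * hit_step n k = bin_cdf n k / bin_weight n k"
    unfolding hit_step_def by (rule cancel) (use pos in linarith)
  moreover have "p * k / n * hit_step n (k - 1) = bin_cdf n j / bin_weight n k"
  proof -
    have "hit_step n (k - 1) = bin_cdf n j / (bin_weight n k * (p * k / n))"
      unfolding hit_step_def using k flow by simp
    then show ?thesis
      using pos p_pos assms by (simp add: field_simps)
  qed
  moreover have "bin_cdf n k = bin_cdf n j + bin_weight n k"
    unfolding bin_cdf_def k by simp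
  ultimately show ?thesis
    using pos by (simp add: diff_divide_distrib[symmetric])
qed

lemma hit_step_balance_0: "0 < n \<Longrightarrow> q * hit_step n 0 = 1"
  unfolding hit_step_def bin_cdf_def using bin_weight_pos[of 0 n] q_pos by simp

lemma hit_time_harmonic:
  assumes "k < n"
  shows "real k / n * (q * hit_time n k + p * hit_time n (k - 1)) +
     (real n - real k) / n * (q * hit_time n (k + 1) + p * hit_time n k) = hit_time n k - 1"
proof (cases "k = 0")
  case True
  then show ?thesis
    using hit_step_balance_0 hit_time_Suc[of 0 n] assms by (simp add: field_simps flip: one_minus_q)
next
  case False
  have down: "hit_time n (k - 1) = hit_step n (k - 1) + hit_time n k"
    using hit_time_Suc[of "k - 1" n] False assms by simp
  have up: "hit_time n (k + 1) = hit_time n k - hit_step n k"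
    using hit_time_Suc[of k n] assms by simp
  show ?thesis
    using hit_step_balance[of k n] False assms unfolding down up
    by (simp add: field_simps flip: one_minus_q)
qed

lemma hit_time_ge_1:
  assumes "k < n"
  shows "1 \<le> hit_time n k"
proof -
  have "0 \<le> real k / n * (q * hit_time n k + p * hit_time n (k - 1)) +
     (real n - real k) / n * (q * hit_time n (k + 1) + p * hit_time n k)"
    using assms p_pos q_pos hit_time_nonneg by (intro add_nonneg_nonneg mult_nonneg_nonneg) auto
  then show ?thesis
    using hit_time_harmonic[OF assms] by simp
qed

section \<open>Geometric bounds on the tail of the completion time\<close>

lemma sum_clumsy_step_hit_time:
  assumes "A \<subseteq> {..<n}" "A \<noteq> {..<n}"
  shows "(\<Sum>x\<in>{..<n} \<times> UNIV. pmf (clumsy_step n q) x * hit_time n (card (clumsy_update A x))) =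
     hit_time n (card A) - 1"
  using sum_clumsy_step_card_update[of n q A "hit_time n"]
    hit_time_harmonic[OF card_less_of_subset_lessThan[OF assms]]
    card_less_of_subset_lessThan[OF assms] assms(1) less_imp_le[OF q_pos] less_imp_le[OF q_lt_1]
  by (simp add: one_minus_q)

lemma prob_clumsy_unfinished_le:
  assumes "1 \<le> n" "A \<subseteq> {..<n}"
  shows "measure (clumsy_space n q) (clumsy_unfinished n A t) \<le>
           (1 - 1 / hit_time n 0) ^ t * hit_time n (card A) / hit_time n (n - 1)"
  using assms(2)
proof (induction t arbitrary: A)
  case 0
  show ?case
  proof (cases "A = {..<n}")
    case False
    then have "hit_time n (n - 1) \<le> hit_time n (card A)"
      using card_less_of_subset_lessThan[OF 0] by (intro hit_time_antimono) simp
    then show ?thesis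
      using False hit_time_pos[of "n - 1" n] assms(1) by (simp add: measure_clumsy_unfinished_0)
  qed (simp add: measure_clumsy_unfinished_0)
next
  case (Suc t)
  let ?C = "(1 - 1 / hit_time n 0) ^ t / hit_time n (n - 1)"
  have C: "0 \<le> ?C"
    using hit_time_ge_1[of 0 n] hit_time_nonneg assms(1) by simp
  show ?case
  proof (cases "A = {..<n}")
    case True
    then show ?thesis using assms(1) by (simp add: measure_clumsy_unfinished_Suc)
  next
    case False
    have "measure (clumsy_space n q) (clumsy_unfinished n A (Suc t)) =
        (\<Sum>x\<in>{..<n} \<times> UNIV. pmf (clumsy_step n q) x *
           measure (clumsy_space n q) (clumsy_unfinished n (clumsy_update A x) t))"
      using False assms(1) by (simp add: measure_clumsy_unfinished_Suc)
    also have "\<dots> \<le> (\<Sum>x\<in>{..<n} \<times> UNIV. pmf (clumsy_step n q) x * (?C * hit_time n (card (clumsy_update A x))))"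
      using Suc.IH[OF clumsy_update_subset[OF Suc.prems]]
      by (intro sum_mono mult_left_mono) (auto simp: pmf_nonneg)
    also have "\<dots> = ?C * (\<Sum>x\<in>{..<n} \<times> UNIV. pmf (clumsy_step n q) x * hit_time n (card (clumsy_update A x)))"
      by (simp add: sum_distrib_left mult_ac)
    also have "\<dots> = ?C * (hit_time n (card A) - 1)"
      by (simp only: sum_clumsy_step_hit_time[OF Suc.prems False])
    also have "\<dots> \<le> ?C * ((1 - 1 / hit_time n 0) * hit_time n (card A))"
    proof (rule mult_left_mono[OF _ C])
      have "hit_time n (card A) / hit_time n 0 \<le> 1"
        using hit_time_antimono[of 0 "card A" n] hit_time_ge_1[of 0 n] assms(1) by simp
      then show "hit_time n (card A) - 1 \<le> (1 - 1 / hit_time n 0) * hit_time n (card A)"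
        by (simp add: algebra_simps)
    qed
    finally show ?thesis by (simp add: mult_ac)
  qed
qed

lemma prob_clumsy_unfinished_ge:
  assumes "1 \<le> n" "A \<subseteq> {..<n}"
  shows "(1 - 1 / hit_time n (n - 1)) ^ t * hit_time n (card A) / hit_time n 0 \<le>
           measure (clumsy_space n q) (clumsy_unfinished n A t)"
  using assms(2)
proof (induction t arbitrary: A)
  case 0
  show ?case
    using hit_time_antimono[of 0 "card A" n] hit_time_pos[of 0 n] assms(1)
    by (simp add: measure_clumsy_unfinished_0)
next
  case (Suc t)
  let ?C = "(1 - 1 / hit_time n (n - 1)) ^ t / hit_time n 0"
  have C: "0 \<le> ?C"
    using hit_time_ge_1[of "n - 1" n] hit_time_nonneg assms(1) by simp
  show ?case
  proof (cases "A = {..<n}")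
    case True
    then show ?thesis using assms(1) by (simp add: measure_clumsy_unfinished_Suc)
  next
    case False
    have "(1 - 1 / hit_time n (n - 1)) ^ Suc t * hit_time n (card A) / hit_time n 0 =
        ?C * ((1 - 1 / hit_time n (n - 1)) * hit_time n (card A))"
      by simp
    also have "\<dots> \<le> ?C * (hit_time n (card A) - 1)"
    proof (rule mult_left_mono[OF _ C])
      have "1 \<le> hit_time n (card A) / hit_time n (n - 1)"
        using card_less_of_subset_lessThan[OF Suc.prems False] hit_time_ge_1[of "n - 1" n] assms(1)
          hit_time_antimono[of "card A" "n - 1" n] by simp
      then show "(1 - 1 / hit_time n (n - 1)) * hit_time n (card A) \<le> hit_time n (card A) - 1"
        by (simp add: algebra_simps)
    qed
    also have "\<dots> = ?C * (\<Sum>x\<in>{..<n} \<times> UNIV. pmf (clumsy_step n q) x * hit_time n (card (clumsy_update A x)))"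
      by (simp only: sum_clumsy_step_hit_time[OF Suc.prems False])
    also have "\<dots> = (\<Sum>x\<in>{..<n} \<times> UNIV. pmf (clumsy_step n q) x * (?C * hit_time n (card (clumsy_update A x))))"
      by (simp add: sum_distrib_left mult_ac)
    also have "\<dots> \<le> (\<Sum>x\<in>{..<n} \<times> UNIV. pmf (clumsy_step n q) x *
           measure (clumsy_space n q) (clumsy_unfinished n (clumsy_update A x) t))"
      using Suc.IH[OF clumsy_update_subset[OF Suc.prems]]
      by (intro sum_mono mult_left_mono) (auto simp: pmf_nonneg)
    also have "\<dots> = measure (clumsy_space n q) (clumsy_unfinished n A (Suc t))"
      using False assms(1) by (simp add: measure_clumsy_unfinished_Suc)
    finally show ?thesis .
  qed
qed

end

section \<open>Asymptotics of the hitting times\<close>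

lemma tendsto_one_minus_inverse_power_floor:
  fixes M c :: "nat \<Rightarrow> real"
  assumes Mc: "(\<lambda>n. M n * c n) \<longlonglongrightarrow> 1" and c_pos: "\<And>n. 0 < c n" and c: "c \<longlonglongrightarrow> 0"
    and "0 \<le> x"
  shows "(\<lambda>n. (1 - 1 / M n) ^ nat \<lfloor>x / c n\<rfloor>) \<longlonglongrightarrow> exp (- x)"
proof -
  define t where "t n = nat \<lfloor>x / c n\<rfloor>" for n
  have M: "filterlim M at_top sequentially"
  proof -
    have "filterlim (\<lambda>n. (M n * c n) * inverse (c n)) at_top sequentially"
      using c c_pos by (intro filterlim_tendsto_pos_mult_at_top[OF Mc] filterlim_inverse_at_top) auto
    moreover have "(M n * c n) * inverse (c n) = M n" for n
      using c_pos[of n] by simp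
    ultimately show ?thesis by simp
  qed
  have tc: "(\<lambda>n. t n * c n) \<longlonglongrightarrow> x"
  proof (rule tendsto_sandwich[of "\<lambda>n. x - c n" _ _ "\<lambda>n. x"])
    have "x / c n - 1 \<le> t n" "t n \<le> x / c n" for n
      unfolding t_def using \<open>0 \<le> x\<close> c_pos[of n] by (auto simp: of_nat_nat)
    then show "\<forall>\<^sub>F n in sequentially. x - c n \<le> t n * c n"
      and "\<forall>\<^sub>F n in sequentially. t n * c n \<le> x"
      using c_pos by (auto simp: field_simps)
    show "(\<lambda>n. x - c n) \<longlonglongrightarrow> x"
      using tendsto_diff[OF tendsto_const c] by simp
  qed simp
  have "((\<lambda>y::real. y * ln (1 - 1 / y)) \<longlongrightarrow> -1) at_top"
    by real_asymp
  then have L: "(\<lambda>n. M n * ln (1 - 1 / M n)) \<longlonglongrightarrow> -1"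
    using filterlim_compose M by blast
  have "(\<lambda>n. exp (t n * c n * (M n * ln (1 - 1 / M n)) / (M n * c n))) \<longlonglongrightarrow> exp (x * -1 / 1)"
    by (intro tendsto_intros tc Mc L) simp
  moreover have "\<forall>\<^sub>F n in sequentially. exp (t n * c n * (M n * ln (1 - 1 / M n)) / (M n * c n)) =
      (1 - 1 / M n) ^ t n"
    using M[unfolded filterlim_at_top_dense, rule_format, of 1]
  proof eventually_elim
    case (elim n)
    then have "exp (t n * c n * (M n * ln (1 - 1 / M n)) / (M n * c n)) = exp (t n * ln (1 - 1 / M n))"
      using c_pos[of n] by simp
    also have "\<dots> = (1 - 1 / M n) ^ t n"
      using elim by (simp add: exp_of_nat_mult field_simps)
    finally show ?case .
  qed
  ultimately show ?thesis
    unfolding t_def by (simp add: tendsto_cong)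
qed

context clumsy_collector
begin

lemma hit_time_last_eq: "1 \<le> n \<Longrightarrow> hit_time n (n - 1) * (p * q ^ n) = 1 - q ^ n"
proof -
  assume "1 \<le> n"
  then obtain m where m: "n = Suc m" by (cases n) auto
  have "bin_cdf n m = 1 - q ^ n"
    using bin_cdf_total[of n] unfolding bin_cdf_def m by (simp add: bin_weight_def)
  moreover have "bin_weight n m * (q * (real n - real m) / n) = p * q ^ n"
    unfolding bin_weight_def m by (simp add: field_simps)
  ultimately show ?thesis
    using p_pos q_pos by (simp add: hit_time_def hit_step_def m)
qed

lemma scaled_hit_step_eq:
  assumes "i < n"
  shows "p * q ^ n * hit_step n (n - 1 - i) =
           bin_cdf n (n - 1 - i) * q ^ i / (real ((n - 1) choose i) * p ^ i)"
proof -
  define j where "j = n - 1 - i"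
  have j: "n - j = Suc i" "n = Suc j + i" "real n - real j = real (n - j)"
    using assms by (auto simp: j_def of_nat_diff)
  have choose: "(n - 1) choose j = (n - 1) choose i"
    using assms binomial_symmetric[of i "n - 1"] by (simp add: j_def)
  have absorb: "real (Suc i) * real (n choose j) = real n * real ((n - 1) choose i)"
    using binomial_absorb_comp[of n j] unfolding j(1) choose by (metis of_nat_mult)
  have "bin_weight n j * (q * (real n - real j) / n) =
      real (Suc i) * real (n choose j) * q ^ Suc j * p ^ Suc i / n"
    unfolding bin_weight_def j(3) j(1) by (simp add: mult_ac)
  also have "\<dots> = real n * real ((n - 1) choose i) * q ^ Suc j * p ^ Suc i / n"
    unfolding absorb ..
  also have "\<dots> = real ((n - 1) choose i) * q ^ Suc j * p ^ Suc i"
    using assms by simp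
  finally have denominator:
    "bin_weight n j * (q * (real n - real j) / n) = real ((n - 1) choose i) * q ^ Suc j * p ^ Suc i" .
  have power_split: "q ^ n = q ^ Suc j * q ^ i"
    unfolding j(2) by (rule power_add)
  have "0 < real ((n - 1) choose i)"
    using assms by simp
  then show ?thesis
    unfolding j_def[symmetric] hit_step_def denominator power_split using p_pos q_pos
    by (simp add: field_simps)
qed

lemma scaled_hit_step_le_small:
  fixes i K :: nat
  assumes "1 \<le> i" "i \<le> K" "K < n" and small: "q * K / (p * (real n - 1)) \<le> 1"
  shows "p * q ^ n * hit_step n (n - 1 - i) \<le> q * K / (p * (real n - 1))"
proof -
  have i: "i < n" "i \<le> n - 1" "real (n - 1) = real n - 1"
    using assms by (auto simp: of_nat_diff)
  have binom: "0 < (real (n - 1) / i) ^ i" "(real (n - 1) / i) ^ i \<le> real ((n - 1) choose i)"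
    using assms i(2) binomial_ge_n_over_k_pow_k[of i "n - 1"] by auto
  have "p * q ^ n * hit_step n (n - 1 - i) \<le> 1 * q ^ i / (real ((n - 1) choose i) * p ^ i)"
    unfolding scaled_hit_step_eq[OF i(1)] using bin_cdf_le_1[of "n - 1 - i" n] p_pos q_pos
    by (intro divide_right_mono mult_right_mono) (use i in auto)
  also have "\<dots> = (q / p) ^ i / real ((n - 1) choose i)"
    by (simp add: power_divide)
  also have "\<dots> \<le> (q / p) ^ i / (real (n - 1) / i) ^ i"
    using binom p_pos q_pos i by (intro divide_left_mono mult_pos_pos) auto
  also have "\<dots> = (q * i / (p * (real n - 1))) ^ i"
    unfolding i(3) by (simp add: power_divide power_mult_distrib)
  also have "\<dots> \<le> (q * K / (p * (real n - 1))) ^ i"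
    using assms p_pos q_pos by (intro power_mono divide_right_mono mult_left_mono) auto
  also have "\<dots> \<le> q * K / (p * (real n - 1))"
  proof -
    have "0 \<le> q * K / (p * (real n - 1))"
      using assms p_pos q_pos by simp
    then show ?thesis
      using power_decreasing[of 1 i "q * K / (p * (real n - 1))"] small assms(1) by simp
  qed
  finally show ?thesis .
qed

lemma scaled_hit_step_le_large:
  assumes "i < n"
  shows "p * q ^ n * hit_step n (n - 1 - i) \<le> n * p * q ^ i"
proof -
  have C: "0 < real ((n - 1) choose i)"
    using assms by simp
  have F: "bin_cdf n (n - 1 - i) \<le> real (n choose Suc i) * p ^ Suc i"
    using bin_cdf_tail_le[of "Suc i" n] assms by (simp add: diff_diff_left)
  have absorb: "real (Suc i) * real (n choose Suc i) = real n * real ((n - 1) choose i)"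
    by (metis binomial_absorption of_nat_mult)
  have "p * q ^ n * hit_step n (n - 1 - i) \<le>
      real (n choose Suc i) * p ^ Suc i * q ^ i / (real ((n - 1) choose i) * p ^ i)"
    unfolding scaled_hit_step_eq[OF assms] using C p_pos q_pos F
    by (intro divide_right_mono mult_right_mono) auto
  also have "\<dots> = p * q ^ i * (real (n choose Suc i) / real ((n - 1) choose i))"
    using p_pos by (simp add: field_simps)
  also have "real (n choose Suc i) / real ((n - 1) choose i) = real n / real (Suc i)"
    using absorb C by (simp add: field_simps)
  also have "p * q ^ i * (real n / real (Suc i)) \<le> p * q ^ i * real n"
    using p_pos q_pos by (intro mult_left_mono) (auto simp: field_simps)
  finally show ?thesis by (simp add: mult_ac)
qed

lemma scaled_hit_time_excess_le:
  fixes K :: nat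
  assumes "K < n" and small: "q * K / (p * (real n - 1)) \<le> 1"
  shows "p * q ^ n * (hit_time n 0 - hit_time n (n - 1)) \<le>
           K * (q * K / (p * (real n - 1))) + n * (n * p * q ^ K)"
proof -
  let ?g = "\<lambda>i. p * q ^ n * hit_step n (n - 1 - i)"
  have "hit_time n 0 - hit_time n (n - 1) = (\<Sum>j<n - 1. hit_step n j)"
    unfolding hit_time_def using sum.atLeastLessThan_concat[of 0 "n - 1" n "hit_step n"]
    by (simp add: atLeast0LessThan)
  also have "\<dots> = (\<Sum>i<n - 1. hit_step n (n - 1 - Suc i))"
    by (rule sum.nat_diff_reindex[symmetric])
  also have "\<dots> = (\<Sum>i\<in>{1..n - 1}. hit_step n (n - 1 - i))"
    by (simp only: One_nat_def sum.atLeast1_atMost_eq)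
  moreover have "{1..n - 1} = {1..K} \<union> {K<..n - 1}"
    using assms(1) by auto
  ultimately have "p * q ^ n * (hit_time n 0 - hit_time n (n - 1)) = sum ?g ({1..K} \<union> {K<..n - 1})"
    by (simp add: sum_distrib_left)
  also have "\<dots> = sum ?g {1..K} + sum ?g {K<..n - 1}"
    by (rule sum.union_disjoint) auto
  also have "sum ?g {1..K} \<le> K * (q * K / (p * (real n - 1)))"
  proof -
    have "?g i \<le> q * K / (p * (real n - 1))" if "i \<in> {1..K}" for i
      using that assms by (intro scaled_hit_step_le_small) auto
    then have "sum ?g {1..K} \<le> card {1..K} * (q * K / (p * (real n - 1)))"
      by (rule sum_bounded_above)
    then show ?thesis by simp
  qed
  also have "sum ?g {K<..n - 1} \<le> n * (n * p * q ^ K)"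
  proof -
    have "?g i \<le> n * p * q ^ K" if "i \<in> {K<..n - 1}" for i
    proof -
      have "?g i \<le> n * p * q ^ i"
        using that by (intro scaled_hit_step_le_large) auto
      also have "\<dots> \<le> n * p * q ^ K"
        using that p_pos q_pos q_lt_1 by (intro mult_left_mono power_decreasing) auto
      finally show ?thesis .
    qed
    then have "sum ?g {K<..n - 1} \<le> card {K<..n - 1} * (n * p * q ^ K)"
      by (rule sum_bounded_above)
    also have "\<dots> \<le> n * (n * p * q ^ K)"
      using p_pos q_pos by (intro mult_right_mono) auto
    finally show ?thesis .
  qed
  finally show ?thesis by simp
qed

lemma hit_time_last_asymp: "(\<lambda>n. hit_time n (n - 1) * (p * q ^ n)) \<longlonglongrightarrow> 1"
proof -
  have "(\<lambda>n. 1 - q ^ n) \<longlonglongrightarrow> 1 - 0"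
    using q_pos q_lt_1 by (intro tendsto_diff tendsto_const LIMSEQ_power_zero) auto
  moreover have "\<forall>\<^sub>F n in sequentially. 1 - q ^ n = hit_time n (n - 1) * (p * q ^ n)"
    using eventually_ge_at_top[of 1] by eventually_elim (metis hit_time_last_eq)
  ultimately show ?thesis
    by (simp add: Lim_transform_eventually)
qed

lemma scaled_hit_time_excess_le_cube_root:
  fixes n :: nat
  defines "r \<equiv> real n powr (1/3)"
  assumes "2 \<le> n" "r < real n - 1" "q / p * (r / (real n - 1)) \<le> 1"
  shows "p * q ^ n * (hit_time n 0 - hit_time n (n - 1)) \<le>
           q / p * (r ^ 2 / (real n - 1)) + p * (real n * real n * q powr (r - 1))"
proof -
  \<comment> \<open>The cut-off K ~ n^(1/3) makes both K^2/n and n^2 q^K vanish.\<close>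
  define K where "K = nat \<lfloor>r\<rfloor>"
  have K: "r - 1 \<le> K" "K \<le> r" "0 \<le> r"
    unfolding K_def r_def by (linarith, simp_all)
  have n: "0 < real n - 1"
    using assms(2) by auto
  have "real K < n"
    using K(2) assms(3) by simp
  moreover have "q * K / (p * (real n - 1)) \<le> q / p * (r / (real n - 1))"
    using K(2) n p_pos q_pos by (simp add: divide_right_mono mult_left_mono)
  ultimately have "p * q ^ n * (hit_time n 0 - hit_time n (n - 1)) \<le>
      K * (q * K / (p * (real n - 1))) + n * (n * p * q ^ K)"
    using assms(4) by (intro scaled_hit_time_excess_le) auto
  moreover have "K * (q * K / (p * (real n - 1))) \<le> q / p * (r ^ 2 / (real n - 1))"
  proof -
    have "real K * real K \<le> r * r"
      using K by (intro mult_mono) auto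
    then have "q * (real K * real K) / (p * (real n - 1)) \<le> q * (r * r) / (p * (real n - 1))"
      using n p_pos q_pos by (intro divide_right_mono mult_left_mono) auto
    then show ?thesis
      by (simp add: power2_eq_square mult_ac)
  qed
  moreover have "n * (n * p * q ^ K) \<le> p * (real n * real n * q powr (r - 1))"
  proof -
    have "q ^ K \<le> q powr (r - 1)"
      using K(1) q_pos q_lt_1 by (simp add: powr_realpow[symmetric] powr_mono')
    then have "p * (real n * real n) * q ^ K \<le> p * (real n * real n) * q powr (r - 1)"
      using p_pos by (intro mult_left_mono) auto
    then show ?thesis
      by (simp add: mult_ac)
  qed
  ultimately show ?thesis
    by linarith
qed

lemma scaled_hit_time_excess_tendsto:
  "(\<lambda>n. p * q ^ n * (hit_time n 0 - hit_time n (n - 1))) \<longlonglongrightarrow> 0"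
proof -
  define r where "r n = real n powr (1/3)" for n :: nat
  have r_ratio: "(\<lambda>n. r n / (real n - 1)) \<longlonglongrightarrow> 0" "(\<lambda>n. r n ^ 2 / (real n - 1)) \<longlonglongrightarrow> 0"
    unfolding r_def by real_asymp+
  have "(\<lambda>n::nat. real n * real n * s powr (real n powr (1/3) - 1)) \<longlonglongrightarrow> 0"
    if "0 < s" "s < 1" for s :: real
    using that by real_asymp
  then have "(\<lambda>n. real n * real n * q powr (r n - 1)) \<longlonglongrightarrow> 0"
    using q_pos q_lt_1 by (simp add: r_def)
  then have "(\<lambda>n. q / p * (r n ^ 2 / (real n - 1)) + p * (real n * real n * q powr (r n - 1)))
               \<longlonglongrightarrow> q / p * 0 + p * 0"
    by (intro tendsto_intros r_ratio)
  then have bound: "(\<lambda>n. q / p * (r n ^ 2 / (real n - 1)) + p * (real n * real n * q powr (r n - 1)))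
                      \<longlonglongrightarrow> 0"
    by simp
  have "\<forall>\<^sub>F n in sequentially. q / p * (r n / (real n - 1)) < 1"
    using order_tendstoD(2)[OF tendsto_mult_right_zero[OF r_ratio(1), of "q / p"]] by simp
  moreover have "\<forall>\<^sub>F n in sequentially. r n / (real n - 1) < 1"
    using order_tendstoD(2)[OF r_ratio(1), of 1] by simp
  ultimately have upper: "\<forall>\<^sub>F n in sequentially. p * q ^ n * (hit_time n 0 - hit_time n (n - 1)) \<le>
      q / p * (r n ^ 2 / (real n - 1)) + p * (real n * real n * q powr (r n - 1))"
    using eventually_ge_at_top[of 2]
  proof eventually_elim
    case (elim n)
    then have "r n < real n - 1"
      by (simp add: field_simps)
    then show ?case
      using elim unfolding r_def by (intro scaled_hit_time_excess_le_cube_root) auto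
  qed
  have "\<forall>\<^sub>F n in sequentially. 0 \<le> p * q ^ n * (hit_time n 0 - hit_time n (n - 1))"
    using hit_time_antimono[of 0] p_pos q_pos by simp
  then show ?thesis
    using upper bound by (rule tendsto_sandwich[OF _ _ tendsto_const])
qed

lemma hit_time_0_asymp: "(\<lambda>n. hit_time n 0 * (p * q ^ n)) \<longlonglongrightarrow> 1"
proof -
  have "(\<lambda>n. p * q ^ n * (hit_time n 0 - hit_time n (n - 1)) + hit_time n (n - 1) * (p * q ^ n))
          \<longlonglongrightarrow> 0 + 1"
    by (intro tendsto_add scaled_hit_time_excess_tendsto hit_time_last_asymp)
  then show ?thesis by (simp add: algebra_simps)
qed

lemma prob_clumsy_unfinished_tendsto:
  assumes "0 \<le> x"
  shows "(\<lambda>n. measure (clumsy_space n q) (clumsy_unfinished n {} (nat \<lfloor>x / (p * q ^ n)\<rfloor>)))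
           \<longlonglongrightarrow> exp (- x)"
proof -
  define t where "t n = nat \<lfloor>x / (p * q ^ n)\<rfloor>" for n
  have scale: "0 < p * q ^ n" for n
    using p_pos q_pos by simp
  have "(\<lambda>n. p * q ^ n) \<longlonglongrightarrow> p * 0"
    using q_pos q_lt_1 by (intro tendsto_mult tendsto_const LIMSEQ_power_zero) auto
  then have scale_lim: "(\<lambda>n. p * q ^ n) \<longlonglongrightarrow> 0" by simp
  have lower_lim: "(\<lambda>n. (1 - 1 / hit_time n (n - 1)) ^ t n) \<longlonglongrightarrow> exp (- x)"
    unfolding t_def
    by (rule tendsto_one_minus_inverse_power_floor[OF hit_time_last_asymp scale scale_lim assms])
  have "(\<lambda>n. (hit_time n 0 * (p * q ^ n)) / (hit_time n (n - 1) * (p * q ^ n))) \<longlonglongrightarrow> 1 / 1"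
    by (intro tendsto_divide hit_time_0_asymp hit_time_last_asymp) simp
  moreover have "(hit_time n 0 * (p * q ^ n)) / (hit_time n (n - 1) * (p * q ^ n)) =
      hit_time n 0 / hit_time n (n - 1)" for n
    using p_pos q_pos by simp
  ultimately have "(\<lambda>n. hit_time n 0 / hit_time n (n - 1)) \<longlonglongrightarrow> 1"
    by simp
  then have "(\<lambda>n. (1 - 1 / hit_time n 0) ^ t n * (hit_time n 0 / hit_time n (n - 1)))
               \<longlonglongrightarrow> exp (- x) * 1"
    unfolding t_def
    by (intro tendsto_mult tendsto_one_minus_inverse_power_floor[OF hit_time_0_asymp scale scale_lim assms])
  then have upper_lim: "(\<lambda>n. (1 - 1 / hit_time n 0) ^ t n * hit_time n 0 / hit_time n (n - 1))
                          \<longlonglongrightarrow> exp (- x)"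
    by simp
  have "\<forall>\<^sub>F n in sequentially. (1 - 1 / hit_time n (n - 1)) ^ t n \<le>
          measure (clumsy_space n q) (clumsy_unfinished n {} (t n))"
    using eventually_ge_at_top[of 1]
  proof eventually_elim
    case (elim n)
    then have "0 < hit_time n 0"
      using hit_time_pos[of 0 n] by simp
    then show ?case
      using prob_clumsy_unfinished_ge[OF elim, of "{}" "t n"] by simp
  qed
  moreover have "\<forall>\<^sub>F n in sequentially. measure (clumsy_space n q) (clumsy_unfinished n {} (t n)) \<le>
          (1 - 1 / hit_time n 0) ^ t n * hit_time n 0 / hit_time n (n - 1)"
    using eventually_ge_at_top[of 1]
  proof eventually_elim
    case (elim n)
    then show ?case
      using prob_clumsy_unfinished_le[OF elim, of "{}" "t n"] by simp
  qed
  ultimately show ?thesis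
    unfolding t_def[symmetric] using lower_lim upper_lim by (rule tendsto_sandwich)
qed

end

section \<open>The completion time\<close>

lemma enat_less_clumsy_T_iff: "enat t < clumsy_T n \<omega> \<longleftrightarrow> \<omega> \<in> clumsy_unfinished n {} t"
proof (cases "\<exists>s. clumsy_run {} \<omega> s = {..<n}")
  case True
  define T where "T = (LEAST s. clumsy_run {} \<omega> s = {..<n})"
  have full: "clumsy_run {} \<omega> T = {..<n}"
    unfolding T_def using LeastI_ex[OF True] .
  have below: "clumsy_run {} \<omega> s \<noteq> {..<n}" if "s < T" for s
    using not_less_Least[of s "\<lambda>s. clumsy_run {} \<omega> s = {..<n}"] that unfolding T_def by blast
  have "t < T \<longleftrightarrow> (\<forall>s\<le>t. clumsy_run {} \<omega> s \<noteq> {..<n})"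
  proof
    assume "t < T"
    then show "\<forall>s\<le>t. clumsy_run {} \<omega> s \<noteq> {..<n}"
      using below le_less_trans by blast
  next
    assume "\<forall>s\<le>t. clumsy_run {} \<omega> s \<noteq> {..<n}"
    then show "t < T"
      using full not_le by blast
  qed
  moreover have "clumsy_T n \<omega> = enat T"
    using True unfolding clumsy_T_def clumsy_state_eq_run T_def by simp
  ultimately show ?thesis
    by (simp add: clumsy_unfinished_def)
next
  case False
  then show ?thesis
    by (simp add: clumsy_T_def clumsy_state_eq_run clumsy_unfinished_def)
qed

lemma measurable_enat_countI:
  fixes f :: "'a \<Rightarrow> enat"
  assumes less: "\<And>t. {x \<in> space M. enat t < f x} \<in> sets M"
  shows "f \<in> measurable M (count_space UNIV)"
  unfolding measurable_count_space_eq2_countable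
proof (intro conjI ballI)
  fix a :: enat
  let ?L = "\<lambda>t. {x \<in> space M. enat t < f x}"
  show "f -` {a} \<inter> space M \<in> sets M"
  proof (cases a)
    case (enat k)
    have "f x = enat k \<longleftrightarrow> \<not> enat k < f x \<and> (\<forall>j<k. enat j < f x)" for x
      by (cases "f x") (auto, metis less_irrefl nat_neq_iff)
    then have "f -` {a} \<inter> space M = space M - ?L k - (\<Union>j<k. space M - ?L j)"
      unfolding enat by blast
    also have "\<dots> \<in> sets M"
      using sets.Diff[OF sets.top less] by (intro sets.Diff sets.top sets.finite_UN less) auto
    finally show ?thesis .
  next
    case infinity
    have "f x = \<infinity> \<longleftrightarrow> (\<forall>t. enat t < f x)" for x
      by (cases "f x") auto
    then have "f -` {a} \<inter> space M = space M - (\<Union>t. space M - ?L t)"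
      unfolding infinity by blast
    also have "\<dots> \<in> sets M"
      using sets.Diff[OF sets.top less] by (intro sets.Diff sets.top sets.countable_UN) auto
    finally show ?thesis .
  qed
qed simp

lemma clumsy_T_measurable [measurable]:
  "clumsy_T n \<in> measurable (clumsy_space n q) (count_space UNIV)"
  by (rule measurable_enat_countI)
    (simp add: enat_less_clumsy_T_iff clumsy_unfinished_sets space_clumsy_space)

lemma scaled_clumsy_T_measurable:
  "(\<lambda>\<omega>. c * (case clumsy_T n \<omega> of enat k \<Rightarrow> real k | \<infinity> \<Rightarrow> 0)) \<in> borel_measurable (clumsy_space n q)"
proof -
  have "(\<lambda>a. c * (case a of enat k \<Rightarrow> real k | \<infinity> \<Rightarrow> 0)) \<in> measurable (count_space UNIV) borel"
    by simp
  from measurable_compose[OF clumsy_T_measurable this] show ?thesis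
    by (simp add: o_def)
qed

lemma cdf_exponential_1:
  "cdf (density lborel (exponential_density 1)) x = (if 0 \<le> x then 1 - exp (- x) else 0)"
proof -
  let ?M = "density lborel (exponential_density 1)"
  interpret prob_space ?M by (rule prob_space_exponential_density) simp
  have D: "distributed ?M lborel (\<lambda>x. x) (exponential_density 1)"
    unfolding distributed_def by (auto simp: distr_id2)
  have cdf_prob: "cdf ?M y = \<P>(z in ?M. z \<le> y)" for y
    by (simp add: cdf_def2 atMost_def)
  show ?thesis
  proof (cases "0 \<le> x")
    case True
    then show ?thesis using exponential_distributedD_le[OF D True] cdf_prob by simp
  next
    case False
    have "cdf ?M x \<le> cdf ?M 0"
      unfolding cdf_def2 using False by (intro finite_measure_mono) auto
    also have "\<dots> = 0" using exponential_distributedD_le[OF D, of 0] cdf_prob by simp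
    finally show ?thesis
      using False measure_nonneg[of ?M "{..x}"] by (simp add: cdf_def2)
  qed
qed

context clumsy_collector
begin

lemma AE_clumsy_T_finite:
  assumes "1 \<le> n"
  shows "AE \<omega> in clumsy_space n q. clumsy_T n \<omega> \<noteq> \<infinity>"
proof -
  interpret prob_space "clumsy_space n q" by (rule prob_space_clumsy_space)
  let ?N = "{\<omega>. clumsy_T n \<omega> = \<infinity>}"
  let ?rate = "1 - 1 / hit_time n 0"
  have rate: "0 \<le> ?rate" "?rate < 1"
    using hit_time_ge_1[of 0 n] assms by auto
  have "prob ?N \<le> ?rate ^ t * (hit_time n 0 / hit_time n (n - 1))" for t
  proof -
    have "?N \<subseteq> clumsy_unfinished n {} t"
      by (auto simp: enat_less_clumsy_T_iff[symmetric])
    then have "prob ?N \<le> prob (clumsy_unfinished n {} t)"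
      by (intro finite_measure_mono clumsy_unfinished_sets)
    then show ?thesis
      using prob_clumsy_unfinished_le[OF assms, of "{}" t] by simp
  qed
  moreover have "(\<lambda>t. ?rate ^ t * (hit_time n 0 / hit_time n (n - 1))) \<longlonglongrightarrow> 0"
    using rate by (intro tendsto_mult_left_zero LIMSEQ_power_zero) simp
  ultimately have "prob ?N \<le> 0"
    by (intro tendsto_lowerbound[OF _ always_eventually]) auto
  then have "prob {\<omega> \<in> space (clumsy_space n q). clumsy_T n \<omega> = \<infinity>} = 0"
    using measure_nonneg[of "clumsy_space n q" ?N] by (simp add: space_clumsy_space)
  moreover have "{\<omega> \<in> space (clumsy_space n q). clumsy_T n \<omega> = \<infinity>} \<in> sets (clumsy_space n q)"
    using measurable_sets[OF clumsy_T_measurable, of "{\<infinity>}"] by (simp add: vimage_def Int_def conj_commute)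
  ultimately show ?thesis
    using prob_Collect_eq_0[of "\<lambda>\<omega>. clumsy_T n \<omega> = \<infinity>"] by simp
qed

lemma cdf_scaled_clumsy_T:
  assumes "1 \<le> n" "0 \<le> x"
  shows "cdf (distr (clumsy_space n q) borel
                (\<lambda>\<omega>. p * q ^ n * (case clumsy_T n \<omega> of enat k \<Rightarrow> real k | \<infinity> \<Rightarrow> 0))) x =
           1 - measure (clumsy_space n q) (clumsy_unfinished n {} (nat \<lfloor>x / (p * q ^ n)\<rfloor>))"
proof -
  interpret prob_space "clumsy_space n q" by (rule prob_space_clumsy_space)
  let ?f = "\<lambda>\<omega>. p * q ^ n * (case clumsy_T n \<omega> of enat k \<Rightarrow> real k | \<infinity> \<Rightarrow> 0)"
  let ?E = "clumsy_unfinished n {} (nat \<lfloor>x / (p * q ^ n)\<rfloor>)"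
  have scale: "0 < p * q ^ n"
    using p_pos q_pos by simp
  have "AE \<omega> in clumsy_space n q. ?f \<omega> \<le> x \<longleftrightarrow> \<omega> \<in> UNIV - ?E"
    using AE_clumsy_T_finite[OF assms(1)]
  proof eventually_elim
    case (elim \<omega>)
    then obtain k where "clumsy_T n \<omega> = enat k" by auto
    moreover have "p * q ^ n * k \<le> x \<longleftrightarrow> k \<le> nat \<lfloor>x / (p * q ^ n)\<rfloor>"
    proof -
      have "k \<le> nat \<lfloor>x / (p * q ^ n)\<rfloor> \<longleftrightarrow> real k \<le> x / (p * q ^ n)"
        using scale assms(2) by (simp add: le_nat_iff le_floor_iff)
      then show ?thesis
        using scale by (simp add: pos_le_divide_eq mult.commute)
    qed
    ultimately show ?case
      by (simp add: enat_less_clumsy_T_iff[symmetric] not_less)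
  qed
  moreover have "{\<omega> \<in> space (clumsy_space n q). ?f \<omega> \<le> x} \<in> sets (clumsy_space n q)"
    using measurable_sets[OF scaled_clumsy_T_measurable, of "{..x}"] by (simp add: vimage_def Int_def conj_commute)
  moreover have "UNIV - ?E \<in> sets (clumsy_space n q)"
    using sets.compl_sets[OF clumsy_unfinished_sets] by (simp add: space_clumsy_space)
  ultimately have "prob {\<omega>. ?f \<omega> \<le> x} = prob (UNIV - ?E)"
    by (intro measure_eq_AE) (auto simp: space_clumsy_space)
  then show ?thesis
    using prob_compl[OF clumsy_unfinished_sets]
    by (simp add: cdf_def2 measure_distr vimage_def space_clumsy_space)
qed

lemma cdf_scaled_clumsy_T_neg:
  assumes "x < 0"
  shows "cdf (distr (clumsy_space n q) borel
                (\<lambda>\<omega>. p * q ^ n * (case clumsy_T n \<omega> of enat k \<Rightarrow> real k | \<infinity> \<Rightarrow> 0))) x = 0"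
proof -
  have "0 \<le> p * q ^ n * (case clumsy_T n \<omega> of enat k \<Rightarrow> real k | \<infinity> \<Rightarrow> 0)" for \<omega>
    using p_pos q_pos by (simp split: enat.split)
  then have "\<not> p * q ^ n * (case clumsy_T n \<omega> of enat k \<Rightarrow> real k | \<infinity> \<Rightarrow> 0) \<le> x" for \<omega>
    using assms by (meson le_less_trans not_le)
  then have "{\<omega>. p * q ^ n * (case clumsy_T n \<omega> of enat k \<Rightarrow> real k | \<infinity> \<Rightarrow> 0) \<le> x} = {}"
    by blast
  then show ?thesis
    by (simp add: cdf_def2 measure_distr vimage_def space_clumsy_space)
qed

lemma cdf_scaled_clumsy_T_tendsto:
  "(\<lambda>n. cdf (distr (clumsy_space n q) borel
             (\<lambda>\<omega>. p * q ^ n * (case clumsy_T n \<omega> of enat k \<Rightarrow> real k | \<infinity> \<Rightarrow> 0))) x)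
     \<longlonglongrightarrow> cdf (density lborel (exponential_density 1)) x"
proof (cases "0 \<le> x")
  case True
  have "(\<lambda>n. 1 - measure (clumsy_space n q) (clumsy_unfinished n {} (nat \<lfloor>x / (p * q ^ n)\<rfloor>)))
          \<longlonglongrightarrow> 1 - exp (- x)"
    by (intro tendsto_diff tendsto_const prob_clumsy_unfinished_tendsto True)
  moreover have "\<forall>\<^sub>F n in sequentially.
      1 - measure (clumsy_space n q) (clumsy_unfinished n {} (nat \<lfloor>x / (p * q ^ n)\<rfloor>)) =
      cdf (distr (clumsy_space n q) borel
             (\<lambda>\<omega>. p * q ^ n * (case clumsy_T n \<omega> of enat k \<Rightarrow> real k | \<infinity> \<Rightarrow> 0))) x"
    using eventually_ge_at_top[of 1] by eventually_elim (simp add: cdf_scaled_clumsy_T True)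
  ultimately show ?thesis
    using True by (simp add: cdf_exponential_1 Lim_transform_eventually)
next
  case False
  then show ?thesis
    by (simp add: cdf_scaled_clumsy_T_neg cdf_exponential_1)
qed

end

theorem mainTheorem3:
  fixes p :: real
  assumes "0 < p" and "p < 1"
  shows "weak_conv_m
           (\<lambda>n. distr (clumsy_space n (1 - p)) borel
                   (\<lambda>\<omega>. p * (1 - p) ^ n * (case clumsy_T n \<omega> of enat k \<Rightarrow> real k | \<infinity> \<Rightarrow> 0)))
           (density lborel (exponential_density 1))"
proof -
  interpret clumsy_collector p "1 - p"
    using assms by unfold_locales auto
  show ?thesis
    unfolding weak_conv_m_def weak_conv_def by (intro allI impI cdf_scaled_clumsy_T_tendsto)
qed

end
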